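(* Let $\mathcal{G}$ be a finite point group, let $\Phi(l,p,q)$ be a $\mathcal{G}$-symmetric coupling function, i.e. $\Phi(R_{\hat O} l, R_{\hat O} p, R_{\hat O} q)=\Phi(l,p,q)$ for all $\hat O\in\mathcal{G}$, and let $P(l)$ be the bosonic propagator obtained from $\Phi$ by the projection rule $$P_{ij}(l)=\int d\mathbf{p}\,d\mathbf{q}\; f_i\!\left(\mathbf{p}-\tfrac{\mathbf{l}}{2}\right) f_j\!\left(\mathbf{q}\pm\tfrac{\mathbf{l}}{2}\right)\,\Phi\big(l,(l_0/2,\mathbf{p}),(\mp l_0/2,\mathbf{q})\big).$$ Let $\mathcal{K}\subseteq\mathcal{G}$ be a subgroup, suppose the set of form factors is well behaved under $\mathcal{K}$, and fix a momentum $l$ such that $P(R_{\hat O} l)=P(l)$ for all $\hat O\in\mathcal{K}$. Then every non-vanishing irreducible block $P^{\alpha\beta}(l)$ of $P(l)$, with $\alpha,\beta$ labeling irreducible representations of $\mathcal{K}$, is a scalar multiple of the identity matrix.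
   Context: Momenta are $1+D$ vectors $l=(l_0,\mathbf{l})$ with a frequency $l_0$ and a wavevector $\mathbf{l}$ in the Brillouin zone; a point-group element $\hat O$ acts by an orthogonal matrix $R_{\hat O}$ on the wavevector part (leaving frequencies unchanged), and the Brillouin zone is invariant under these maps. Integrals $\int d\mathbf{q}$ run over the whole Brillouin zone with measure normalized so that $\int d\mathbf{q}\,1=1$ (this measure is invariant under $R_{\hat O}$). Form factors $f_i$ are real functions on the Brillouin zone, orthonormal: $\int d\mathbf{q}\, f_i(\mathbf{q}) f_j(\mathbf{q})=\delta_{ij}$. A block of form factors transforms according to a representation $\alpha$ of a group $\mathcal{K}$ if $f_i(R_{\hat O}\mathbf{k})=\sum_{i'}(M^\alpha_{\hat O})_{ii'} f_{i'}(\mathbf{k})$ for all $\hat O\in\mathcal{K}$, with $i'$ in the same block and $M^\alpha_{\hat O}$ the representation matrices. A set of form factors is called well behaved under $\mathcal{K}$ if it is organized into blocks each transforming according to an irreducible representation of $\mathcal{K}$ consisting of unitary matrices, such that any two blocks transform according to either identical (the very same matrices $M_{\hat O}$) or inequivalent irreducible representations. $P^{\alpha\beta}$ denotes the block of $P$ with row indices in a block transforming under $\alpha$ and column indices in a block transforming under $\beta$. In the projection rule the upper signs are used in particle-particle channels and the lower signs in particle-hole channels. *)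

theory Defs
  imports "HOL-Analysis.Analysis" "Jordan_Normal_Form.Matrix"
begin

text \<open>Momenta are pairs (frequency, wavevector); wavevectors live in a Euclidean space 'v
  (dimension D = DIM('v)). A point-group element is identified with the orthogonal map
  it induces on wavevectors.\<close>

definition point_group :: "('v::real_inner \<Rightarrow> 'v) set \<Rightarrow> bool" where
  "point_group G \<longleftrightarrow> finite G \<and> id \<in> G \<and> (\<forall>R\<in>G. orthogonal_transformation R)
     \<and> (\<forall>R\<in>G. \<forall>S\<in>G. R \<circ> S \<in> G) \<and> (\<forall>R\<in>G. inv_into UNIV R \<in> G)"

definition mom_act :: "('v \<Rightarrow> 'v) \<Rightarrow> real \<times> 'v \<Rightarrow> real \<times> 'v" where
  "mom_act R l = (fst l, R (snd l))"

definition bz_measure :: "'v::euclidean_space set \<Rightarrow> 'v measure" where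
  "bz_measure B = uniform_measure lborel B"

definition adj_mat :: "complex mat \<Rightarrow> complex mat" where
  "adj_mat A = mat (dim_col A) (dim_row A) (\<lambda>(i,j). cnj (A $$ (j,i)))"

definition unitary_rep :: "('v \<Rightarrow> 'v) set \<Rightarrow> nat \<Rightarrow> (('v \<Rightarrow> 'v) \<Rightarrow> complex mat) \<Rightarrow> bool" where
  "unitary_rep K d M \<longleftrightarrow>
     (\<forall>g\<in>K. M g \<in> carrier_mat d d \<and> M g * adj_mat (M g) = 1\<^sub>m d)
     \<and> (\<forall>g1\<in>K. \<forall>g2\<in>K. M (g1 \<circ> g2) = M g1 * M g2)"

definition subspace_cv :: "nat \<Rightarrow> complex vec set \<Rightarrow> bool" where
  "subspace_cv d W \<longleftrightarrow> W \<subseteq> carrier_vec d \<and> 0\<^sub>v d \<in> W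
     \<and> (\<forall>v\<in>W. \<forall>w\<in>W. v + w \<in> W) \<and> (\<forall>c. \<forall>v\<in>W. c \<cdot>\<^sub>v v \<in> W)"

definition irreducible_rep :: "('v \<Rightarrow> 'v) set \<Rightarrow> nat \<Rightarrow> (('v \<Rightarrow> 'v) \<Rightarrow> complex mat) \<Rightarrow> bool" where
  "irreducible_rep K d M \<longleftrightarrow> 0 < d \<and>
     (\<forall>W. subspace_cv d W \<and> (\<forall>g\<in>K. \<forall>v\<in>W. M g *\<^sub>v v \<in> W)
          \<longrightarrow> W = {0\<^sub>v d} \<or> W = carrier_vec d)"

definition equivalent_rep :: "('v \<Rightarrow> 'v) set \<Rightarrow> nat \<Rightarrow> (('v \<Rightarrow> 'v) \<Rightarrow> complex mat)
     \<Rightarrow> nat \<Rightarrow> (('v \<Rightarrow> 'v) \<Rightarrow> complex mat) \<Rightarrow> bool" where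
  "equivalent_rep K d M d' M' \<longleftrightarrow> d = d' \<and>
     (\<exists>S\<in>carrier_mat d d. invertible_mat S \<and> (\<forall>g\<in>K. S * M g = M' g * S))"

text \<open>Form factors organized in blocks: block b (b in Blocks) has size d b and contains the
  form factors f b 0, ..., f b (d b - 1); rep b is the representation matrix family of block b.\<close>
definition transforms_by :: "('v \<Rightarrow> 'v) set \<Rightarrow> ('b \<Rightarrow> nat \<Rightarrow> 'v \<Rightarrow> real) \<Rightarrow> ('b \<Rightarrow> nat)
     \<Rightarrow> ('b \<Rightarrow> ('v \<Rightarrow> 'v) \<Rightarrow> complex mat) \<Rightarrow> 'b \<Rightarrow> bool" where
  "transforms_by K f d rep b \<longleftrightarrow> (\<forall>g\<in>K. \<forall>a<d b. \<forall>k.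
      complex_of_real (f b a (g k)) = (\<Sum>a'<d b. rep b g $$ (a,a') * complex_of_real (f b a' k)))"

definition well_behaved :: "('v \<Rightarrow> 'v) set \<Rightarrow> 'b set \<Rightarrow> ('b \<Rightarrow> nat \<Rightarrow> 'v \<Rightarrow> real) \<Rightarrow> ('b \<Rightarrow> nat)
     \<Rightarrow> ('b \<Rightarrow> ('v \<Rightarrow> 'v) \<Rightarrow> complex mat) \<Rightarrow> bool" where
  "well_behaved K Blocks f d rep \<longleftrightarrow>
     (\<forall>b\<in>Blocks. unitary_rep K (d b) (rep b) \<and> irreducible_rep K (d b) (rep b)
                 \<and> transforms_by K f d rep b)
     \<and> (\<forall>b\<in>Blocks. \<forall>b'\<in>Blocks. (\<forall>g\<in>K. rep b g = rep b' g)
                 \<or> \<not> equivalent_rep K (d b) (rep b) (d b') (rep b'))"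

text \<open>Integrand of the projection rule; sigma = 1 (upper signs, particle-particle) or
  sigma = -1 (lower signs, particle-hole).\<close>
definition proj_integrand :: "('b \<Rightarrow> nat \<Rightarrow> 'v::euclidean_space \<Rightarrow> real)
     \<Rightarrow> (real \<times> 'v \<Rightarrow> real \<times> 'v \<Rightarrow> real \<times> 'v \<Rightarrow> complex) \<Rightarrow> real \<Rightarrow> real \<times> 'v
     \<Rightarrow> 'b \<Rightarrow> nat \<Rightarrow> 'b \<Rightarrow> nat \<Rightarrow> 'v \<times> 'v \<Rightarrow> complex" where
  "proj_integrand f \<Phi> \<sigma> l b a b' a' pq =
     complex_of_real (f b a (fst pq - (1/2) *\<^sub>R snd l) * f b' a' (snd pq + (\<sigma>/2) *\<^sub>R snd l))
     * \<Phi> l (fst l / 2, fst pq) (- \<sigma> * fst l / 2, snd pq)"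

definition proj_P :: "'v::euclidean_space set \<Rightarrow> ('b \<Rightarrow> nat \<Rightarrow> 'v \<Rightarrow> real)
     \<Rightarrow> (real \<times> 'v \<Rightarrow> real \<times> 'v \<Rightarrow> real \<times> 'v \<Rightarrow> complex) \<Rightarrow> real \<Rightarrow> real \<times> 'v
     \<Rightarrow> 'b \<Rightarrow> nat \<Rightarrow> 'b \<Rightarrow> nat \<Rightarrow> complex" where
  "proj_P B f \<Phi> \<sigma> l b a b' a' =
     integral\<^sup>L (bz_measure B \<Otimes>\<^sub>M bz_measure B) (proj_integrand f \<Phi> \<sigma> l b a b' a')"

definition P_block :: "('b \<Rightarrow> nat \<Rightarrow> 'b \<Rightarrow> nat \<Rightarrow> complex) \<Rightarrow> ('b \<Rightarrow> nat) \<Rightarrow> 'b \<Rightarrow> 'b \<Rightarrow> complex mat" where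
  "P_block P d b b' = mat (d b) (d b') (\<lambda>(a,a'). P b a b' a')"

end

(*
  For g in K, substituting p := g p and q := g q in the projection integral and using the
  invariance of Phi and of the Brillouin zone measure gives P(g l) = M^a(g) P(l) M^b(g)^T.
  Orthonormality of the form factors exhibits the entries of M(g) as integrals of real
  functions, so the unitary matrices M(g) are orthogonal, and P(g l) = P(l) turns each block
  P^ab(l) into an intertwiner of M^a and M^b. By Schur's lemma a nonzero intertwiner of
  irreducible representations is an equivalence, which the well-behavedness excludes unless the
  two representations are identical; and an endomorphism commuting with an irreducible
  representation is a scalar.
*)
theory Submission
  imports Defs "Jordan_Normal_Form.Spectral_Radius"
begin

section \<open>Schur's lemma\<close>

lemma mult_unit_vec_index:
  fixes X :: "'a::comm_ring_1 mat"
  assumes "X \<in> carrier_mat n m" "i < n" "j < m"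
  shows "(X *\<^sub>v unit_vec m j) $ i = X $$ (i, j)"
  using assms by (simp add: scalar_prod_def unit_vec_def if_distrib sum.delta' cong: if_cong)

lemma mat_eq_if_mult_unit_vec:
  fixes X Y :: "'a::comm_ring_1 mat"
  assumes X: "X \<in> carrier_mat n m" and Y: "Y \<in> carrier_mat n m"
    and cols: "\<And>j. j < m \<Longrightarrow> X *\<^sub>v unit_vec m j = Y *\<^sub>v unit_vec m j"
  shows "X = Y"
proof (rule eq_matI)
  fix i j assume "i < dim_row Y" "j < dim_col Y"
  then show "X $$ (i, j) = Y $$ (i, j)"
    using Y mult_unit_vec_index[OF X, of i j] mult_unit_vec_index[OF Y, of i j] cols[of j] by simp
qed (use X Y in auto)

lemma mat_eq_zero_if_kernel_full:
  fixes X :: "'a::comm_ring_1 mat"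
  assumes X: "X \<in> carrier_mat n m" and ker: "\<And>v. v \<in> carrier_vec m \<Longrightarrow> X *\<^sub>v v = 0\<^sub>v n"
  shows "X = 0\<^sub>m n m"
  by (rule mat_eq_if_mult_unit_vec[OF X zero_carrier_mat]) (simp add: ker, rule eq_vecI, auto)

lemma carrier_mat_two_sided_inverse_dim_eq:
  fixes P Q :: "'a::{comm_ring_1,ring_char_0} mat"
  assumes P: "P \<in> carrier_mat n m" and Q: "Q \<in> carrier_mat m n"
    and PQ: "P * Q = 1\<^sub>m n" and QP: "Q * P = 1\<^sub>m m"
  shows "n = m"
proof -
  have "of_nat n = (\<Sum>i<n. (P * Q) $$ (i, i) :: 'a)"
    by (simp add: PQ)
  also have "\<dots> = (\<Sum>i<n. \<Sum>k<m. P $$ (i, k) * Q $$ (k, i))"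
    using P Q by (simp add: scalar_prod_def atLeast0LessThan)
  also have "\<dots> = (\<Sum>k<m. \<Sum>i<n. Q $$ (k, i) * P $$ (i, k))"
    by (subst sum.swap) (simp add: mult.commute)
  also have "\<dots> = (\<Sum>k<m. (Q * P) $$ (k, k))"
    using P Q by (simp add: scalar_prod_def atLeast0LessThan)
  also have "\<dots> = of_nat m"
    by (simp add: QP)
  finally show ?thesis by simp
qed

lemma smult_one_mat_mult_vec:
  fixes v :: "'a::comm_ring_1 vec"
  assumes "v \<in> carrier_vec n"
  shows "(c \<cdot>\<^sub>m 1\<^sub>m n) *\<^sub>v v = c \<cdot>\<^sub>v v"
proof (rule eq_vecI)
  fix i assume i: "i < dim_vec (c \<cdot>\<^sub>v v)"
  have "((c \<cdot>\<^sub>m 1\<^sub>m n) *\<^sub>v v) $ i = (\<Sum>k = 0..<n. c * (if k = i then 1 else 0) * v $ k)"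
    using i assms by (simp add: scalar_prod_def)
  also have "\<dots> = (\<Sum>k = 0..<n. if k = i then c * v $ i else 0)"
    by (rule sum.cong) auto
  finally show "((c \<cdot>\<^sub>m 1\<^sub>m n) *\<^sub>v v) $ i = (c \<cdot>\<^sub>v v) $ i"
    using i assms by simp
qed (use assms in simp)

lemma subspace_cv_kernel:
  fixes X :: "complex mat"
  assumes X: "X \<in> carrier_mat n m"
  shows "subspace_cv m {v \<in> carrier_vec m. X *\<^sub>v v = 0\<^sub>v n}"
  using X by (auto simp: subspace_cv_def mult_add_distrib_mat_vec mult_mat_vec)

lemma subspace_cv_image:
  fixes X :: "complex mat"
  assumes X: "X \<in> carrier_mat n m"
  shows "subspace_cv n ((*\<^sub>v) X ` carrier_vec m)"
  unfolding subspace_cv_def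
proof (intro conjI ballI allI)
  show "(*\<^sub>v) X ` carrier_vec m \<subseteq> carrier_vec n" using X by auto
  have "0\<^sub>v n = X *\<^sub>v 0\<^sub>v m" using X by (intro eq_vecI) auto
  then show "0\<^sub>v n \<in> (*\<^sub>v) X ` carrier_vec m" by (rule image_eqI) auto
next
  fix v w assume "v \<in> (*\<^sub>v) X ` carrier_vec m" "w \<in> (*\<^sub>v) X ` carrier_vec m"
  then obtain v' w' where v': "v' \<in> carrier_vec m" "v = X *\<^sub>v v'" and w': "w' \<in> carrier_vec m" "w = X *\<^sub>v w'"
    by blast
  have "v + w = X *\<^sub>v (v' + w')"
    using X v' w' by (simp add: mult_add_distrib_mat_vec)
  then show "v + w \<in> (*\<^sub>v) X ` carrier_vec m"
    by (rule image_eqI) (use v' w' in auto)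
next
  fix c v assume "v \<in> (*\<^sub>v) X ` carrier_vec m"
  then obtain v' where v': "v' \<in> carrier_vec m" "v = X *\<^sub>v v'"
    by blast
  have "c \<cdot>\<^sub>v v = X *\<^sub>v (c \<cdot>\<^sub>v v')"
    using X v' by (simp add: mult_mat_vec)
  then show "c \<cdot>\<^sub>v v \<in> (*\<^sub>v) X ` carrier_vec m"
    by (rule image_eqI) (use v' in auto)
qed

lemma irreducible_repD:
  assumes "irreducible_rep K d M" "subspace_cv d W" "\<And>g v. g \<in> K \<Longrightarrow> v \<in> W \<Longrightarrow> M g *\<^sub>v v \<in> W"
  shows "W = {0\<^sub>v d} \<or> W = carrier_vec d"
  using assms unfolding irreducible_rep_def by blast

context
  fixes K :: "('v \<Rightarrow> 'v) set" and A C :: "('v \<Rightarrow> 'v) \<Rightarrow> complex mat" and X :: "complex mat"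
    and n m :: nat
  assumes A: "\<forall>g\<in>K. A g \<in> carrier_mat n n" and C: "\<forall>g\<in>K. C g \<in> carrier_mat m m"
    and X: "X \<in> carrier_mat n m" and intertwines: "\<forall>g\<in>K. A g * X = X * C g"
    and nonzero: "X \<noteq> 0\<^sub>m n m"
begin

lemma irreducible_rep_intertwiner_kernel_trivial:
  assumes irr: "irreducible_rep K m C" and v: "v \<in> carrier_vec m" "X *\<^sub>v v = 0\<^sub>v n"
  shows "v = 0\<^sub>v m"
proof -
  let ?Ker = "{v \<in> carrier_vec m. X *\<^sub>v v = 0\<^sub>v n}"
  have "C g *\<^sub>v w \<in> ?Ker" if "g \<in> K" "w \<in> ?Ker" for g w
  proof -
    have Ag: "A g \<in> carrier_mat n n" and Cg: "C g \<in> carrier_mat m m" and w: "w \<in> carrier_vec m"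
      using that A C by auto
    have "X *\<^sub>v (C g *\<^sub>v w) = (A g * X) *\<^sub>v w"
      using Cg X w intertwines \<open>g \<in> K\<close> by simp
    also have "\<dots> = A g *\<^sub>v 0\<^sub>v n"
      using Ag X w that by simp
    also have "\<dots> = 0\<^sub>v n"
      using Ag by auto
    finally show ?thesis using Cg w by simp
  qed
  moreover have "?Ker \<noteq> carrier_vec m"
  proof
    assume "?Ker = carrier_vec m"
    then have "X = 0\<^sub>m n m" by (intro mat_eq_zero_if_kernel_full[OF X]) auto
    with nonzero show False ..
  qed
  ultimately have "?Ker = {0\<^sub>v m}"
    using irreducible_repD[OF irr subspace_cv_kernel[OF X]] by blast
  then show ?thesis using v by blast
qed

lemma irreducible_rep_intertwiner_injective:
  assumes irr: "irreducible_rep K m C" and v: "v \<in> carrier_vec m" and w: "w \<in> carrier_vec m"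
    and eq: "X *\<^sub>v v = X *\<^sub>v w"
  shows "v = w"
proof -
  have "X *\<^sub>v (v - w) = 0\<^sub>v n"
    using X v w eq by (simp add: mult_minus_distrib_mat_vec)
  then have "v - w = 0\<^sub>v m"
    using irreducible_rep_intertwiner_kernel_trivial[OF irr] v w by simp
  show ?thesis
  proof (rule eq_vecI)
    fix i assume "i < dim_vec w"
    then show "v $ i = w $ i"
      using arg_cong[OF \<open>v - w = 0\<^sub>v m\<close>, of "\<lambda>u. u $ i"] v w by simp
  qed (use v w in simp)
qed

lemma irreducible_rep_intertwiner_surjective:
  assumes irr: "irreducible_rep K n A" and w: "w \<in> carrier_vec n"
  shows "\<exists>v\<in>carrier_vec m. X *\<^sub>v v = w"
proof -
  let ?Img = "(*\<^sub>v) X ` carrier_vec m"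
  have "A g *\<^sub>v w \<in> ?Img" if "g \<in> K" "w \<in> ?Img" for g w
  proof -
    obtain v where v: "v \<in> carrier_vec m" "w = X *\<^sub>v v" using \<open>w \<in> ?Img\<close> by blast
    have Ag: "A g \<in> carrier_mat n n" and Cg: "C g \<in> carrier_mat m m"
      using that A C by auto
    have "A g *\<^sub>v w = (A g * X) *\<^sub>v v"
      using Ag X v by simp
    also have "\<dots> = (X * C g) *\<^sub>v v"
      using intertwines \<open>g \<in> K\<close> by simp
    also have "\<dots> = X *\<^sub>v (C g *\<^sub>v v)"
      using Cg X v by simp
    finally show ?thesis using v Cg by auto
  qed
  moreover have "?Img \<noteq> {0\<^sub>v n}"
  proof
    assume "?Img = {0\<^sub>v n}"
    then have "X = 0\<^sub>m n m" by (intro mat_eq_zero_if_kernel_full[OF X]) auto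
    with nonzero show False ..
  qed
  ultimately have "?Img = carrier_vec n"
    using irreducible_repD[OF irr subspace_cv_image[OF X]] by blast
  then show ?thesis using w by (metis imageE)
qed

lemma irreducible_rep_intertwiner_invertible:
  assumes irrA: "irreducible_rep K n A" and irrC: "irreducible_rep K m C"
  shows "\<exists>Q\<in>carrier_mat m n. X * Q = 1\<^sub>m n \<and> Q * X = 1\<^sub>m m"
proof -
  obtain pre where pre: "\<And>j. j < n \<Longrightarrow> pre j \<in> carrier_vec m \<and> X *\<^sub>v pre j = unit_vec n j"
    using irreducible_rep_intertwiner_surjective[OF irrA unit_vec_carrier] by metis
  define Q where "Q = mat m n (\<lambda>(i, j). vec_index (pre j) i)"
  have Q: "Q \<in> carrier_mat m n" by (simp add: Q_def)
  have Q_col: "Q *\<^sub>v unit_vec n j = pre j" if "j < n" for j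
    using pre[OF that] mult_unit_vec_index[OF Q _ that] that by (intro eq_vecI) (auto simp: Q_def)
  have XQ: "X * Q = 1\<^sub>m n"
    by (rule mat_eq_if_mult_unit_vec[OF mult_carrier_mat[OF X Q] one_carrier_mat])
      (use X Q pre Q_col in simp)
  have "Q * X = 1\<^sub>m m"
  proof (rule mat_eq_if_mult_unit_vec[OF mult_carrier_mat[OF Q X] one_carrier_mat])
    fix j assume "j < m"
    have "X *\<^sub>v ((Q * X) *\<^sub>v unit_vec m j) = ((X * Q) * X) *\<^sub>v unit_vec m j"
      using assoc_mult_mat[OF X Q X] assoc_mult_mat_vec[OF X mult_carrier_mat[OF Q X] unit_vec_carrier]
      by simp
    also have "\<dots> = X *\<^sub>v unit_vec m j"
      using X by (simp add: XQ)
    finally show "(Q * X) *\<^sub>v unit_vec m j = 1\<^sub>m m *\<^sub>v unit_vec m j"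
      using irreducible_rep_intertwiner_injective[OF irrC] Q X by simp
  qed
  with Q XQ show ?thesis by blast
qed

lemma irreducible_rep_intertwiner_equivalent:
  assumes irrA: "irreducible_rep K n A" and irrC: "irreducible_rep K m C"
  shows "equivalent_rep K n A m C"
proof -
  obtain Q where Q: "Q \<in> carrier_mat m n" and XQ: "X * Q = 1\<^sub>m n" and QX: "Q * X = 1\<^sub>m m"
    using irreducible_rep_intertwiner_invertible[OF irrA irrC] by blast
  have "n = m"
    by (rule carrier_mat_two_sided_inverse_dim_eq[OF X Q XQ QX])
  have "Q * A g = C g * Q" if "g \<in> K" for g
  proof -
    have Ag: "A g \<in> carrier_mat n n" and Cg: "C g \<in> carrier_mat m m"
      using that A C by auto
    have "Q * A g = Q * A g * (X * Q)"
      using Q Ag by (simp add: XQ)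
    also have "\<dots> = Q * (A g * X) * Q"
      using assoc_mult_mat[OF mult_carrier_mat[OF Q Ag] X Q] assoc_mult_mat[OF Q Ag X] by simp
    also have "\<dots> = Q * X * C g * Q"
      using intertwines that assoc_mult_mat[OF Q X Cg] by simp
    also have "\<dots> = C g * Q"
      using Cg Q by (simp add: QX)
    finally show ?thesis .
  qed
  moreover have "invertible_mat Q"
    using Q X XQ QX \<open>n = m\<close> by (auto simp: invertible_mat_def inverts_mat_def)
  ultimately show ?thesis
    using Q \<open>n = m\<close> by (auto simp: equivalent_rep_def)
qed

end

lemma irreducible_rep_commutant_scalar:
  assumes irr: "irreducible_rep K n A" and A: "\<forall>g\<in>K. A g \<in> carrier_mat n n"
    and X: "X \<in> carrier_mat n n" and comm: "\<forall>g\<in>K. A g * X = X * A g"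
  shows "\<exists>c. X = c \<cdot>\<^sub>m 1\<^sub>m n"
proof -
  have "0 < n" using irr by (simp add: irreducible_rep_def)
  obtain c where "c \<in> spectrum X" using spectrum_non_empty[OF X \<open>0 < n\<close>] by blast
  then obtain v where v: "v \<in> carrier_vec n" "v \<noteq> 0\<^sub>v n" "X *\<^sub>v v = c \<cdot>\<^sub>v v"
    using X by (auto simp: spectrum_def eigenvalue_def eigenvector_def)
  define Y where "Y = X - c \<cdot>\<^sub>m 1\<^sub>m n"
  have Y: "Y \<in> carrier_mat n n"
    using X unfolding Y_def by (intro minus_carrier_mat smult_carrier_mat one_carrier_mat)
  have "A g * Y = Y * A g" if "g \<in> K" for g
  proof -
    have Ag: "A g \<in> carrier_mat n n" using A that by blast
    have "A g * Y = A g * X - c \<cdot>\<^sub>m A g"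
      using Ag X mult_smult_distrib[OF Ag one_carrier_mat, of c] by (simp add: Y_def mult_minus_distrib_mat)
    also have "\<dots> = Y * A g"
      using Ag X comm that mult_smult_assoc_mat[OF one_carrier_mat Ag, of c]
      by (simp add: Y_def minus_mult_distrib_mat)
    finally show ?thesis .
  qed
  moreover have "Y *\<^sub>v v = 0\<^sub>v n"
    using X v by (simp add: Y_def minus_mult_distrib_mat_vec smult_one_mat_mult_vec)
  ultimately have "Y = 0\<^sub>m n n"
    using irreducible_rep_intertwiner_kernel_trivial[OF A A Y] irr v by blast
  have "X = c \<cdot>\<^sub>m 1\<^sub>m n"
  proof (rule eq_matI)
    fix i j assume "i < dim_row (c \<cdot>\<^sub>m 1\<^sub>m n)" "j < dim_col (c \<cdot>\<^sub>m 1\<^sub>m n)"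
    then have ij: "i < n" "j < n" by auto
    then have "Y $$ (i, j) = 0" using \<open>Y = 0\<^sub>m n n\<close> by simp
    then show "X $$ (i, j) = (c \<cdot>\<^sub>m 1\<^sub>m n) $$ (i, j)" using X ij by (simp add: Y_def)
  qed (use X in auto)
  then show ?thesis ..
qed

lemma intertwiner_scalar_if_identical_or_inequivalent:
  assumes irrA: "irreducible_rep K n A" and irrC: "irreducible_rep K m C" and "K \<noteq> {}"
    and A: "\<forall>g\<in>K. A g \<in> carrier_mat n n" and C: "\<forall>g\<in>K. C g \<in> carrier_mat m m"
    and X: "X \<in> carrier_mat n m" and intertwines: "\<forall>g\<in>K. A g * X = X * C g"
    and nonzero: "X \<noteq> 0\<^sub>m n m"
    and dichotomy: "(\<forall>g\<in>K. A g = C g) \<or> \<not> equivalent_rep K n A m C"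
  shows "\<exists>c. X = c \<cdot>\<^sub>m 1\<^sub>m n"
  using dichotomy
proof
  assume same: "\<forall>g\<in>K. A g = C g"
  with A C \<open>K \<noteq> {}\<close> have "n = m"
    by (metis all_not_in_conv carrier_matD(1))
  with same show ?thesis
    using irreducible_rep_commutant_scalar[OF irrA A] X intertwines by simp
next
  assume "\<not> equivalent_rep K n A m C"
  with irreducible_rep_intertwiner_equivalent[OF A C X intertwines nonzero irrA irrC]
  show ?thesis by contradiction
qed

section \<open>Invariance of the Brillouin zone measure under orthogonal maps\<close>

no_notation Matrix.scalar_prod (infix "\<bullet>" 70)
no_notation Matrix.vec_index (infixl "$" 100)

lemma linear_borel_measurable:
  fixes f :: "'a::euclidean_space \<Rightarrow> 'b::euclidean_space"
  shows "linear f \<Longrightarrow> f \<in> borel_measurable borel"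
  by (intro borel_measurable_continuous_onI linear_continuous_on) (simp add: linear_conv_bounded_linear)

lemma distr_lborel_orthogonal_cart:
  fixes T :: "real^'n::{finite,wellorder} \<Rightarrow> real^'n::_"
  assumes T: "orthogonal_transformation T"
  shows "distr lborel borel T = lborel"
proof (rule lborel_eqI[symmetric])
  have T_meas: "T \<in> borel_measurable borel"
    using T by (simp add: linear_borel_measurable orthogonal_transformation_linear)
  define T' where "T' = inv_into UNIV T"
  have T': "orthogonal_transformation T'"
    unfolding T'_def by (rule orthogonal_transformation_inv[OF T])
  have vimage_T: "T -` S = T' ` S" for S
    using orthogonal_transformation_bij[OF T] unfolding T'_def by (auto simp: bij_vimage_eq_inv_image)
  fix l u :: "real^'n::{finite,wellorder}" assume "\<And>b. b \<in> Basis \<Longrightarrow> l \<bullet> b \<le> u \<bullet> b"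
  then have "emeasure lborel (box l u) = (\<Prod>b\<in>Basis. (u - l) \<bullet> b)"
    by (simp add: emeasure_lborel_box_eq)
  moreover have "emeasure (distr lborel borel T) (box l u) = emeasure lborel (box l u)"
  proof -
    have box: "box l u \<in> lmeasurable" by simp
    have "emeasure (distr lborel borel T) (box l u) = emeasure lebesgue (T -` box l u)"
      using T_meas by (simp add: emeasure_distr measurable_sets_borel)
    also have "\<dots> = emeasure lebesgue (T' ` box l u)"
      by (simp add: vimage_T)
    also have "\<dots> = measure lebesgue (T' ` box l u)"
      using measurable_orthogonal_image[OF T' box] by (simp add: emeasure_eq_measure2)
    also have "\<dots> = emeasure lborel (box l u)"
      using measure_orthogonal_image[OF T' box] box
      by (simp add: emeasure_eq_measure2)
    finally show ?thesis .
  qed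
  ultimately show "emeasure (distr lborel borel T) (box l u) = (\<Prod>b\<in>Basis. (u - l) \<bullet> b)"
    by simp
qed simp

text \<open>The library proves invariance of Lebesgue measure under orthogonal maps only on
  real^'n with a well-ordered index type 'n. It is transferred to an arbitrary Euclidean space
  'a along the isometry basis_comb E from real^'i onto 'a, where E enumerates Basis by an index
  type 'a basis_index of cardinality DIM('a).\<close>

definition basis_comb :: "('i::finite \<Rightarrow> 'a::euclidean_space) \<Rightarrow> real^'i \<Rightarrow> 'a" where
  "basis_comb E y = (\<Sum>i\<in>UNIV. y $ i *\<^sub>R E i)"

lemma linear_basis_comb: "linear (basis_comb E)"
  unfolding basis_comb_def
  by (rule linearI) (simp_all add: scaleR_add_left sum.distrib scaleR_sum_right)

context
  fixes E :: "'i::finite \<Rightarrow> 'a::euclidean_space"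
  assumes E: "bij_betw E UNIV Basis"
begin

lemma Ball_Basis_enum: "(\<forall>b\<in>Basis. P b) \<longleftrightarrow> (\<forall>i. P (E i))"
proof -
  have "Basis = range E" using E by (simp add: bij_betw_def)
  then show ?thesis unfolding \<open>Basis = range E\<close> by blast
qed

lemma inner_Basis_enum: "E i \<bullet> E j = (if i = j then 1 else 0)"
proof -
  have "E i \<in> Basis" "E j \<in> Basis" "E i = E j \<longleftrightarrow> i = j"
    using E by (auto simp: bij_betw_def inj_eq)
  then show ?thesis by (simp add: inner_Basis)
qed

lemma inner_basis_comb: "basis_comb E y \<bullet> E i = y $ i"
  by (simp add: basis_comb_def inner_sum_left inner_Basis_enum if_distrib cong: if_cong)

lemma basis_comb_coords: "basis_comb E (\<chi> i. x \<bullet> E i) = x"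
proof -
  have "basis_comb E (\<chi> i. x \<bullet> E i) = (\<Sum>i\<in>UNIV. (x \<bullet> E i) *\<^sub>R E i)"
    by (simp add: basis_comb_def)
  also have "\<dots> = (\<Sum>b\<in>Basis. (x \<bullet> b) *\<^sub>R b)"
    by (rule sum.reindex_bij_betw[OF E])
  finally show ?thesis by (simp add: euclidean_representation)
qed

lemma norm_basis_comb: "norm (basis_comb E y) = norm y"
proof -
  have "basis_comb E y \<bullet> basis_comb E y = (\<Sum>b\<in>Basis. (basis_comb E y \<bullet> b)\<^sup>2)"
    by (subst euclidean_inner) (simp add: power2_eq_square)
  also have "\<dots> = (\<Sum>i\<in>UNIV. (basis_comb E y \<bullet> E i)\<^sup>2)"
    by (rule sum.reindex_bij_betw[OF E, symmetric])
  finally show ?thesis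
    by (simp add: norm_eq_sqrt_inner inner_vec_def inner_basis_comb power2_eq_square)
qed

lemma distr_lborel_basis_comb: "distr lborel borel (basis_comb E) = lborel"
proof (rule lborel_eqI[symmetric])
  fix l u :: 'a assume le: "\<And>b. b \<in> Basis \<Longrightarrow> l \<bullet> b \<le> u \<bullet> b"
  let ?c = "\<lambda>x. \<chi> i. x \<bullet> E i"
  have E_Basis: "E i \<in> Basis" for i
    using E by (auto simp: bij_betw_def)
  have "y \<in> basis_comb E -` box l u \<longleftrightarrow> y \<in> box (?c l) (?c u)" for y
    unfolding vimage_eq mem_box_cart mem_box(1) Ball_Basis_enum by (simp add: inner_basis_comb)
  then have vimage_box: "basis_comb E -` box l u = box (?c l) (?c u)" by blast
  have "emeasure (distr lborel borel (basis_comb E)) (box l u) = emeasure lborel (box (?c l) (?c u))"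
    using linear_borel_measurable[OF linear_basis_comb[of E]] by (simp add: emeasure_distr vimage_box)
  also have "\<dots> = (\<Prod>b\<in>Basis. (?c u - ?c l) \<bullet> b)"
    using le[OF E_Basis] by (simp add: emeasure_lborel_box_eq Basis_vec_def cart_eq_inner_axis[symmetric])
  also have "(\<Prod>b\<in>Basis. (?c u - ?c l) \<bullet> b) = (\<Prod>i\<in>UNIV. (?c u - ?c l) \<bullet> axis i 1)"
  proof (rule prod.reindex_bij_betw[symmetric])
    show "bij_betw (\<lambda>i. axis i 1) UNIV (Basis :: (real^'i) set)"
      by (auto simp: bij_betw_def inj_on_def axis_eq_axis Basis_vec_def)
  qed
  also have "\<dots> = (\<Prod>i\<in>UNIV. (u - l) \<bullet> E i)"
    by (simp add: cart_eq_inner_axis[symmetric] inner_diff_left)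
  also have "\<dots> = (\<Prod>b\<in>Basis. (u - l) \<bullet> b)"
    by (rule prod.reindex_bij_betw[OF E])
  finally show "emeasure (distr lborel borel (basis_comb E)) (box l u) = (\<Prod>b\<in>Basis. (u - l) \<bullet> b)" .
qed simp

end

typedef (overloaded) ('a::euclidean_space) basis_index = "{..<DIM('a)}"
  by (rule exI[of _ 0]) simp

instance basis_index :: (euclidean_space) finite
proof
  have "(UNIV :: 'a basis_index set) = Abs_basis_index ` {..<DIM('a)}"
    by (rule type_definition.univ[OF type_definition_basis_index])
  then show "finite (UNIV :: 'a basis_index set)" by (metis finite_imageI finite_lessThan)
qed

instantiation basis_index :: (euclidean_space) linorder
begin

definition less_eq_basis_index :: "'a basis_index \<Rightarrow> 'a basis_index \<Rightarrow> bool"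
  where "i \<le> j \<longleftrightarrow> Rep_basis_index i \<le> Rep_basis_index j"

definition less_basis_index :: "'a basis_index \<Rightarrow> 'a basis_index \<Rightarrow> bool"
  where "i < j \<longleftrightarrow> Rep_basis_index i < Rep_basis_index j"

instance
  by standard (auto simp: less_eq_basis_index_def less_basis_index_def Rep_basis_index_inject)

end

instance basis_index :: (euclidean_space) wellorder
proof -
  have "wf {(i :: 'a basis_index, j). i < j}"
    by (auto simp: trancl_def intro!: finite_acyclic_wf acyclicI)
  then show "OFCLASS('a basis_index, wellorder_class)"
    by (rule wf_wellorderI) intro_classes
qed

lemma bij_betw_basis_index_Basis:
  "\<exists>E. bij_betw E (UNIV :: 'a basis_index set) (Basis :: 'a::euclidean_space set)"
proof -
  obtain e where e: "bij_betw e {..<DIM('a)} (Basis :: 'a set)"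
    using ex_bij_betw_nat_finite[of "Basis :: 'a set"] by (auto simp: atLeast0LessThan)
  have "bij_betw Rep_basis_index (UNIV :: 'a basis_index set) {..<DIM('a)}"
    using type_definition.Rep_range[OF type_definition_basis_index]
    by (auto simp: bij_betw_def inj_on_def Rep_basis_index_inject)
  then show ?thesis using bij_betw_trans[OF _ e] by blast
qed

lemma distr_lborel_orthogonal:
  fixes R :: "'a::euclidean_space \<Rightarrow> 'a"
  assumes R: "orthogonal_transformation R"
  shows "distr lborel borel R = lborel"
proof -
  obtain E :: "'a basis_index \<Rightarrow> 'a" where E: "bij_betw E UNIV Basis"
    using bij_betw_basis_index_Basis by blast
  let ?\<psi> = "basis_comb E"
  define T where "T y = (\<chi> i. R (?\<psi> y) \<bullet> E i)" for y
  have \<psi>_T: "?\<psi> (T y) = R (?\<psi> y)" for y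
    unfolding T_def by (rule basis_comb_coords[OF E])
  have "orthogonal_transformation T"
  proof (unfold orthogonal_transformation, intro conjI allI)
    show "linear T"
      unfolding T_def using R linear_basis_comb[of E]
      by (intro linearI) (simp_all add: orthogonal_transformation_linear linear_add linear_scale
          inner_add_left Finite_Cartesian_Product.vec_eq_iff)
    show "norm (T y) = norm y" for y
      using norm_basis_comb[OF E, of "T y"] norm_basis_comb[OF E, of y] R
      by (simp add: \<psi>_T orthogonal_transformation_norm)
  qed
  then have T: "distr lborel borel T = lborel"
    by (rule distr_lborel_orthogonal_cart)
  have meas: "R \<in> borel_measurable borel" "?\<psi> \<in> borel_measurable borel" "T \<in> borel_measurable borel"
    using R \<open>orthogonal_transformation T\<close> linear_basis_comb[of E]
    by (simp_all add: linear_borel_measurable orthogonal_transformation_linear)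
  have "distr lborel borel R = distr (distr lborel borel ?\<psi>) borel R"
    by (simp add: distr_lborel_basis_comb[OF E])
  also have "\<dots> = distr lborel borel (?\<psi> \<circ> T)"
    using meas by (simp add: distr_distr comp_def \<psi>_T)
  also have "\<dots> = distr (distr lborel borel T) borel ?\<psi>"
    using meas by (simp add: distr_distr)
  also have "\<dots> = lborel"
    by (simp add: T distr_lborel_basis_comb[OF E])
  finally show ?thesis .
qed

lemma sets_bz_measure [simp, measurable_cong]: "sets (bz_measure B) = sets borel"
  by (simp add: bz_measure_def)

lemma space_bz_measure [simp]: "space (bz_measure B) = UNIV"
  by (simp add: bz_measure_def)

lemma finite_measure_bz_measure:
  assumes "B \<in> sets lborel" "0 < emeasure lborel B" "emeasure lborel B < \<infinity>"
  shows "finite_measure (bz_measure B)"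
proof
  have "emeasure (bz_measure B) UNIV = 1"
    using assms by (simp add: bz_measure_def emeasure_uniform_measure_1)
  then show "emeasure (bz_measure B) (space (bz_measure B)) \<noteq> \<infinity>" by simp
qed

lemma distr_bz_measure_orthogonal:
  fixes R :: "'a::euclidean_space \<Rightarrow> 'a"
  assumes R: "orthogonal_transformation R" and B: "B \<in> sets lborel" and RB: "R ` B = B"
  shows "distr (bz_measure B) (bz_measure B) R = bz_measure B"
proof (rule measure_eqI)
  have R_meas: "R \<in> borel_measurable borel"
    using R by (simp add: linear_borel_measurable orthogonal_transformation_linear)
  have "R -` B = B"
    using RB inj_vimage_image_eq[OF orthogonal_transformation_inj[OF R]] by metis
  then have vimage_Int: "B \<inter> R -` A = R -` (B \<inter> A)" for A
    by auto
  fix A assume "A \<in> sets (distr (bz_measure B) (bz_measure B) R)"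
  then have A: "A \<in> sets borel" by simp
  have "emeasure (distr (bz_measure B) (bz_measure B) R) A = emeasure lborel (R -` (B \<inter> A)) / emeasure lborel B"
    using R_meas A B by (simp add: bz_measure_def emeasure_distr measurable_sets_borel vimage_Int)
  also have "\<dots> = emeasure (distr lborel borel R) (B \<inter> A) / emeasure lborel B"
    using R_meas A B by (simp add: emeasure_distr)
  also have "\<dots> = emeasure (bz_measure B) A"
    using A B by (simp add: distr_lborel_orthogonal[OF R] bz_measure_def)
  finally show "emeasure (distr (bz_measure B) (bz_measure B) R) A = emeasure (bz_measure B) A" .
qed simp

lemma integral_pair_measure_map_invariant:
  fixes H :: "'a \<times> 'a \<Rightarrow> 'b::{banach, second_countable_topology}"
  assumes M: "sigma_finite_measure M" and R: "R \<in> M \<rightarrow>\<^sub>M M" and inv: "distr M M R = M"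
    and H: "H \<in> borel_measurable (M \<Otimes>\<^sub>M M)"
  shows "integral\<^sup>L (M \<Otimes>\<^sub>M M) (\<lambda>(x, y). H (R x, R y)) = integral\<^sup>L (M \<Otimes>\<^sub>M M) H"
proof -
  have RR: "(\<lambda>(x, y). (R x, R y)) \<in> M \<Otimes>\<^sub>M M \<rightarrow>\<^sub>M M \<Otimes>\<^sub>M M"
    using R by measurable
  have "distr (M \<Otimes>\<^sub>M M) (M \<Otimes>\<^sub>M M) (\<lambda>(x, y). (R x, R y)) = distr M M R \<Otimes>\<^sub>M distr M M R"
    using M by (intro pair_measure_distr[OF R R, symmetric]) (simp add: inv)
  then have "distr (M \<Otimes>\<^sub>M M) (M \<Otimes>\<^sub>M M) (\<lambda>(x, y). (R x, R y)) = M \<Otimes>\<^sub>M M"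
    by (simp add: inv)
  then show ?thesis
    using integral_distr[OF RR H] by (simp add: case_prod_beta')
qed

section \<open>Covariance of the projected propagator\<close>

lemma integrable_mult_if_square_integrable:
  fixes u v :: "'a \<Rightarrow> real"
  assumes "u \<in> borel_measurable M" "v \<in> borel_measurable M"
    and "integrable M (\<lambda>x. u x * u x)" "integrable M (\<lambda>x. v x * v x)"
  shows "integrable M (\<lambda>x. u x * v x)"
proof (rule Bochner_Integration.integrable_bound)
  show "integrable M (\<lambda>x. u x * u x + v x * v x)"
    using assms by simp
  show "(\<lambda>x. u x * v x) \<in> borel_measurable M"
    using assms by simp
  have "\<bar>u x * v x\<bar> \<le> u x * u x + v x * v x" for x
  proof -
    have "2 * \<bar>u x\<bar> * \<bar>v x\<bar> \<le> u x * u x + v x * v x"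
      using sum_squares_bound[of "\<bar>u x\<bar>" "\<bar>v x\<bar>"] by (simp add: power2_eq_square)
    moreover have "0 \<le> \<bar>u x\<bar> * \<bar>v x\<bar>" by simp
    ultimately show ?thesis unfolding abs_mult by linarith
  qed
  then show "AE x in M. norm (u x * v x) \<le> norm (u x * u x + v x * v x)"
    by simp
qed

lemma integrable_square_if_normalized:
  fixes u :: "'a \<Rightarrow> real"
  assumes "(LINT x|M. u x * u x) = 1"
  shows "integrable M (\<lambda>x. u x * u x)"
  using assms not_integrable_integral_eq by force

lemma transforms_by_entry_eq_integral:
  fixes M :: "'v measure"
  assumes tr: "transforms_by K f d rep c" and g: "g \<in> K" and a: "a < d c" and e: "e < d c"
    and meas: "\<forall>a<d c. f c a \<in> borel_measurable M"
    and orth: "\<forall>a<d c. \<forall>e<d c. (LINT k|M. f c a k * f c e k) = (if a = e then 1 else 0)"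
  shows "rep c g $$ (a, e) = of_real (LINT k|M. f c a (g k) * f c e k)"
proof -
  have square_int: "integrable M (\<lambda>k. f c a' k * f c a' k)" if "a' < d c" for a'
    using orth that by (intro integrable_square_if_normalized) simp
  have int: "integrable M (\<lambda>k. f c a' k * f c e k)" if "a' < d c" for a'
    using integrable_mult_if_square_integrable[OF meas[rule_format, OF that] meas[rule_format, OF e]
        square_int[OF that] square_int[OF e]] .
  have "complex_of_real (f c a (g k) * f c e k)
      = (\<Sum>a'<d c. rep c g $$ (a, a') * of_real (f c a' k * f c e k))" for k
  proof -
    have "complex_of_real (f c a (g k)) = (\<Sum>a'<d c. rep c g $$ (a, a') * of_real (f c a' k))"
      using tr g a unfolding transforms_by_def by blast
    then show ?thesis by (simp add: sum_distrib_right mult.assoc)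
  qed
  then have "complex_of_real (LINT k|M. f c a (g k) * f c e k)
      = (LINT k|M. (\<Sum>a'<d c. rep c g $$ (a, a') * of_real (f c a' k * f c e k)))"
    by (simp flip: integral_complex_of_real)
  also have "\<dots> = (\<Sum>a'<d c. LINT k|M. rep c g $$ (a, a') * of_real (f c a' k * f c e k))"
    by (intro Bochner_Integration.integral_sum Bochner_Integration.integrable_mult_right
        integrable_of_real int) simp
  also have "\<dots> = (\<Sum>a'<d c. rep c g $$ (a, a') * of_real (LINT k|M. f c a' k * f c e k))"
    by (simp only: integral_mult_right_zero integral_complex_of_real)
  also have "\<dots> = (\<Sum>a'<d c. if a' = e then rep c g $$ (a, a') else 0)"
    by (rule sum.cong) (use orth e in auto)
  also have "\<dots> = rep c g $$ (a, e)"
    using e by simp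
  finally show ?thesis ..
qed

lemma real_unitary_transpose_inverse:
  assumes M: "M \<in> carrier_mat n n" and unitary: "M * Defs.adj_mat M = 1\<^sub>m n"
    and real: "\<And>i j. i < n \<Longrightarrow> j < n \<Longrightarrow> cnj (M $$ (i, j)) = M $$ (i, j)"
  shows "transpose_mat M * M = 1\<^sub>m n"
proof -
  have "transpose_mat M = Defs.adj_mat M"
    using M real by (intro eq_matI) (auto simp: Defs.adj_mat_def)
  then show ?thesis
    using mat_mult_left_right_inverse[OF M _ unitary] M by (simp add: Defs.adj_mat_def)
qed

lemma proj_integrand_mom_act:
  assumes lin: "linear g" and \<Phi>_inv: "\<forall>l p q. \<Phi> (mom_act g l) (mom_act g p) (mom_act g q) = \<Phi> l p q"
    and tr: "transforms_by K f d rep b" "transforms_by K f d rep b'" and g: "g \<in> K"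
    and a: "a < d b" and a': "a' < d b'"
  shows "proj_integrand f \<Phi> \<sigma> (mom_act g l) b a b' a' (g p, g q)
    = (\<Sum>a1<d b. \<Sum>a2<d b'. rep b g $$ (a, a1) * rep b' g $$ (a', a2) * proj_integrand f \<Phi> \<sigma> l b a1 b' a2 (p, q))"
proof -
  define p' where "p' = p - (1/2) *\<^sub>R snd l"
  define q' where "q' = q + (\<sigma>/2) *\<^sub>R snd l"
  define \<phi> where "\<phi> = \<Phi> l (fst l / 2, p) (- \<sigma> * fst l / 2, q)"
  have f_b: "complex_of_real (f b a (g p')) = (\<Sum>a1<d b. rep b g $$ (a, a1) * of_real (f b a1 p'))"
    using tr(1) g a unfolding transforms_by_def by blast
  have f_b': "complex_of_real (f b' a' (g q')) = (\<Sum>a2<d b'. rep b' g $$ (a', a2) * of_real (f b' a2 q'))"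
    using tr(2) g a' unfolding transforms_by_def by blast
  have "\<Phi> (mom_act g l) (fst l / 2, g p) (- \<sigma> * fst l / 2, g q) = \<phi>"
    using \<Phi>_inv unfolding \<phi>_def mom_act_def by (metis fst_conv snd_conv)
  then have "proj_integrand f \<Phi> \<sigma> (mom_act g l) b a b' a' (g p, g q)
      = of_real (f b a (g p')) * of_real (f b' a' (g q')) * \<phi>"
    using lin by (simp add: proj_integrand_def mom_act_def p'_def q'_def linear_diff linear_add linear_scale)
  also have "\<dots> = (\<Sum>a1<d b. \<Sum>a2<d b'. (rep b g $$ (a, a1) * of_real (f b a1 p'))
      * (rep b' g $$ (a', a2) * of_real (f b' a2 q')) * \<phi>)"
    unfolding f_b f_b' by (subst sum_product) (simp only: sum_distrib_right)
  also have "\<dots> = (\<Sum>a1<d b. \<Sum>a2<d b'. rep b g $$ (a, a1) * rep b' g $$ (a', a2) * proj_integrand f \<Phi> \<sigma> l b a1 b' a2 (p, q))"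
    by (simp add: proj_integrand_def p'_def q'_def \<phi>_def mult_ac)
  finally show ?thesis .
qed

lemma proj_P_mom_act:
  fixes g :: "'v::euclidean_space \<Rightarrow> 'v"
  assumes g_orth: "orthogonal_transformation g" and gB: "g ` B = B"
    and B: "B \<in> sets lborel" "0 < emeasure lborel B" "emeasure lborel B < \<infinity>"
    and \<Phi>_inv: "\<forall>l p q. \<Phi> (mom_act g l) (mom_act g p) (mom_act g q) = \<Phi> l p q"
    and tr: "transforms_by K f d rep b" "transforms_by K f d rep b'" and g: "g \<in> K"
    and a: "a < d b" and a': "a' < d b'"
    and int: "\<forall>a1<d b. \<forall>a2<d b'. integrable (bz_measure B \<Otimes>\<^sub>M bz_measure B) (proj_integrand f \<Phi> \<sigma> l b a1 b' a2)"
  shows "proj_P B f \<Phi> \<sigma> (mom_act g l) b a b' a'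
    = (\<Sum>a1<d b. \<Sum>a2<d b'. rep b g $$ (a, a1) * rep b' g $$ (a', a2) * proj_P B f \<Phi> \<sigma> l b a1 b' a2)"
proof -
  let ?M = "bz_measure B"
  \<comment> \<open>Substitute by the inverse of g: only the integrand at l is known to be measurable.\<close>
  define S where "S = inv_into UNIV g"
  have S_orth: "orthogonal_transformation S"
    unfolding S_def by (rule orthogonal_transformation_inv[OF g_orth])
  have g_S: "g (S x) = x" for x
    unfolding S_def using orthogonal_transformation_surj[OF g_orth] by (simp add: surj_f_inv_f)
  have SB: "S ` B = B"
    using gB inv_into_image_cancel[OF orthogonal_transformation_inj[OF g_orth], of B] by (simp add: S_def)
  have S_meas: "S \<in> ?M \<rightarrow>\<^sub>M ?M"
    unfolding measurable_cong_sets[OF sets_bz_measure sets_bz_measure]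
    using S_orth by (simp add: linear_borel_measurable orthogonal_transformation_linear)
  define H where "H z = (\<Sum>a1<d b. \<Sum>a2<d b'. rep b g $$ (a, a1) * rep b' g $$ (a', a2) * proj_integrand f \<Phi> \<sigma> l b a1 b' a2 z)" for z
  have H_int: "integrable (?M \<Otimes>\<^sub>M ?M) H"
    unfolding H_def using int by (intro Bochner_Integration.integrable_sum Bochner_Integration.integrable_mult_right) auto
  have "proj_integrand f \<Phi> \<sigma> (mom_act g l) b a b' a' = (\<lambda>(x, y). H (S x, S y))"
  proof (intro ext, clarify)
    fix x y
    show "proj_integrand f \<Phi> \<sigma> (mom_act g l) b a b' a' (x, y) = H (S x, S y)"
      using proj_integrand_mom_act[OF orthogonal_transformation_linear[OF g_orth] \<Phi>_inv tr g a a',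
          of \<sigma> l "S x" "S y"]
      by (simp add: g_S H_def)
  qed
  then have "proj_P B f \<Phi> \<sigma> (mom_act g l) b a b' a' = integral\<^sup>L (?M \<Otimes>\<^sub>M ?M) (\<lambda>(x, y). H (S x, S y))"
    by (simp add: proj_P_def)
  also have "\<dots> = integral\<^sup>L (?M \<Otimes>\<^sub>M ?M) H"
    using finite_measure_bz_measure[OF B] distr_bz_measure_orthogonal[OF S_orth B(1) SB] S_meas
    by (intro integral_pair_measure_map_invariant borel_measurable_integrable[OF H_int])
      (auto intro: finite_measure.axioms(1))
  also have "\<dots> = (\<Sum>a1<d b. \<Sum>a2<d b'. rep b g $$ (a, a1) * rep b' g $$ (a', a2) * proj_P B f \<Phi> \<sigma> l b a1 b' a2)"
    unfolding H_def proj_P_def using int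
    by (subst Bochner_Integration.integral_sum,
        fastforce)
      (intro sum.cong refl, subst Bochner_Integration.integral_sum, auto)
  finally show ?thesis .
qed

lemma intertwines_if_orthogonally_covariant:
  fixes A C X :: "'a::comm_ring_1 mat"
  assumes A: "A \<in> carrier_mat n n" and C: "C \<in> carrier_mat m m" and X: "X \<in> carrier_mat n m"
    and cov: "X = A * X * transpose_mat C" and orth: "transpose_mat C * C = 1\<^sub>m m"
  shows "A * X = X * C"
proof -
  have "X * C = A * X * transpose_mat C * C"
    by (rule arg_cong[where f = "\<lambda>Y. Y * C", OF cov])
  also have "\<dots> = A * X * (transpose_mat C * C)"
    using A C X by (intro assoc_mult_mat[of _ n m _ m]) auto
  also have "\<dots> = A * X"
    using A X by (simp add: orth)
  finally show ?thesis ..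
qed

lemma P_block_intertwines:
  fixes g :: "'v::euclidean_space \<Rightarrow> 'v"
  assumes g_orth: "orthogonal_transformation g" and gB: "g ` B = B"
    and B: "B \<in> sets lborel" "0 < emeasure lborel B" "emeasure lborel B < \<infinity>"
    and \<Phi>_inv: "\<forall>l p q. \<Phi> (mom_act g l) (mom_act g p) (mom_act g q) = \<Phi> l p q"
    and g: "g \<in> K"
    and rep_b: "unitary_rep K (d b) (rep b)" "transforms_by K f d rep b"
    and rep_b': "unitary_rep K (d b') (rep b')" "transforms_by K f d rep b'"
    and meas: "\<forall>a<d b'. f b' a \<in> borel_measurable borel"
    and orth: "\<forall>a<d b'. \<forall>e<d b'. (LINT k|bz_measure B. f b' a k * f b' e k) = (if a = e then 1 else 0)"
    and int: "\<forall>a1<d b. \<forall>a2<d b'. integrable (bz_measure B \<Otimes>\<^sub>M bz_measure B) (proj_integrand f \<Phi> \<sigma> l b a1 b' a2)"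
    and P_inv: "\<forall>a<d b. \<forall>a'<d b'. proj_P B f \<Phi> \<sigma> (mom_act g l) b a b' a' = proj_P B f \<Phi> \<sigma> l b a b' a'"
  shows "rep b g * P_block (proj_P B f \<Phi> \<sigma> l) d b b' = P_block (proj_P B f \<Phi> \<sigma> l) d b b' * rep b' g"
proof (rule intertwines_if_orthogonally_covariant)
  let ?P = "P_block (proj_P B f \<Phi> \<sigma> l) d b b'"
  show A: "rep b g \<in> carrier_mat (d b) (d b)" and C: "rep b' g \<in> carrier_mat (d b') (d b')"
    using rep_b(1) rep_b'(1) g by (auto simp: unitary_rep_def)
  show "?P \<in> carrier_mat (d b) (d b')"
    by (simp add: P_block_def)
  show "transpose_mat (rep b' g) * rep b' g = 1\<^sub>m (d b')"
  \<comment> \<open>The entries of rep b' g are integrals of real functions.\<close>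
  proof (rule real_unitary_transpose_inverse)
    show "rep b' g * Defs.adj_mat (rep b' g) = 1\<^sub>m (d b')"
      using rep_b'(1) g by (simp add: unitary_rep_def)
    have "f b' a \<in> borel_measurable (bz_measure B)" if "a < d b'" for a
      unfolding measurable_cong_sets[OF sets_bz_measure refl] using meas that by simp
    then show "cnj (rep b' g $$ (i, j)) = rep b' g $$ (i, j)" if "i < d b'" "j < d b'" for i j
      using transforms_by_entry_eq_integral[OF rep_b'(2) g that _ orth] by simp
  qed (fact C)
  show "?P = rep b g * ?P * transpose_mat (rep b' g)"
  proof (rule eq_matI)
    fix i j assume "i < dim_row (rep b g * ?P * transpose_mat (rep b' g))"
      "j < dim_col (rep b g * ?P * transpose_mat (rep b' g))"
    then have i: "i < d b" and j: "j < d b'" using A C by auto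
    have "(rep b g * ?P * transpose_mat (rep b' g)) $$ (i, j)
        = (\<Sum>t<d b. \<Sum>k<d b'. rep b g $$ (i, t) * rep b' g $$ (j, k) * proj_P B f \<Phi> \<sigma> l b t b' k)"
      using A C i j
      by (simp add: P_block_def scalar_prod_def atLeast0LessThan sum_distrib_left sum_distrib_right mult_ac)
        (rule sum.swap)
    also have "\<dots> = proj_P B f \<Phi> \<sigma> (mom_act g l) b i b' j"
      using proj_P_mom_act[OF g_orth gB B \<Phi>_inv rep_b(2) rep_b'(2) g i j int] by simp
    also have "\<dots> = ?P $$ (i, j)"
      using P_inv i j by (simp add: P_block_def)
    finally show "?P $$ (i, j) = (rep b g * ?P * transpose_mat (rep b' g)) $$ (i, j)" ..
  qed (use A C in \<open>auto simp: P_block_def\<close>)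
qed

(* Neither that G is a group nor the value of the sign sigma is used. *)
theorem corollary3:
  fixes G K :: "('v::euclidean_space \<Rightarrow> 'v) set"
    and B :: "'v set"
    and \<Phi> :: "real \<times> 'v \<Rightarrow> real \<times> 'v \<Rightarrow> real \<times> 'v \<Rightarrow> complex"
    and \<sigma> :: real
    and Blocks :: "'b set"
    and f :: "'b \<Rightarrow> nat \<Rightarrow> 'v \<Rightarrow> real"
    and d :: "'b \<Rightarrow> nat"
    and rep :: "'b \<Rightarrow> ('v \<Rightarrow> 'v) \<Rightarrow> complex mat"
    and l :: "real \<times> 'v"
  assumes G: "point_group G"
    and B_meas: "B \<in> sets lborel"
    and B_pos: "0 < emeasure lborel B" and B_fin: "emeasure lborel B < \<infinity>"
    and B_inv: "\<forall>R\<in>G. R ` B = B"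
    and ff_meas: "\<forall>b\<in>Blocks. \<forall>a<d b. f b a \<in> borel_measurable borel"
    and ff_orth: "\<forall>b\<in>Blocks. \<forall>a<d b. \<forall>b'\<in>Blocks. \<forall>a'<d b'.
        (LINT k|bz_measure B. f b a k * f b' a' k) = (if b = b' \<and> a = a' then 1 else 0)"
    and \<Phi>_sym: "\<forall>R\<in>G. \<forall>l p q. \<Phi> (mom_act R l) (mom_act R p) (mom_act R q) = \<Phi> l p q"
    and sign: "\<sigma> = 1 \<or> \<sigma> = -1"
    and K: "K \<subseteq> G" "point_group K"
    and wb: "well_behaved K Blocks f d rep"
    and integrable: "\<forall>b\<in>Blocks. \<forall>a<d b. \<forall>b'\<in>Blocks. \<forall>a'<d b'.
        integrable (bz_measure B \<Otimes>\<^sub>M bz_measure B) (proj_integrand f \<Phi> \<sigma> l b a b' a')"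
    and P_inv: "\<forall>g\<in>K. \<forall>b\<in>Blocks. \<forall>a<d b. \<forall>b'\<in>Blocks. \<forall>a'<d b'.
        proj_P B f \<Phi> \<sigma> (mom_act g l) b a b' a' = proj_P B f \<Phi> \<sigma> l b a b' a'"
  shows "\<forall>b\<in>Blocks. \<forall>b'\<in>Blocks.
           P_block (proj_P B f \<Phi> \<sigma> l) d b b' \<noteq> 0\<^sub>m (d b) (d b') \<longrightarrow>
           (\<exists>c. P_block (proj_P B f \<Phi> \<sigma> l) d b b' = c \<cdot>\<^sub>m 1\<^sub>m (d b))"
proof (intro ballI impI)
  fix b b' assume b: "b \<in> Blocks" and b': "b' \<in> Blocks"
  let ?P = "P_block (proj_P B f \<Phi> \<sigma> l) d b b'"
  assume nonzero: "?P \<noteq> 0\<^sub>m (d b) (d b')"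
  have K_id: "id \<in> K" and K_orth: "\<forall>g\<in>K. orthogonal_transformation g"
    using K(2) by (auto simp: point_group_def)
  have block: "unitary_rep K (d c) (rep c)" "irreducible_rep K (d c) (rep c)" "transforms_by K f d rep c"
    if "c \<in> Blocks" for c
    using wb that by (auto simp: well_behaved_def)
  have "\<forall>g\<in>K. rep b g * ?P = ?P * rep b' g"
  proof
    fix g assume g: "g \<in> K"
    with K(1) have "g \<in> G" by blast
    show "rep b g * ?P = ?P * rep b' g"
      by (rule P_block_intertwines[OF _ _ B_meas B_pos B_fin _ g block(1,3)[OF b] block(1,3)[OF b']])
        (use K_orth B_inv \<Phi>_sym ff_meas ff_orth integrable P_inv g b b' \<open>g \<in> G\<close> in auto)
  qed
  moreover have "(\<forall>g\<in>K. rep b g = rep b' g) \<or> \<not> equivalent_rep K (d b) (rep b) (d b') (rep b')"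
    using wb b b' by (simp add: well_behaved_def)
  moreover have "?P \<in> carrier_mat (d b) (d b')"
    by (simp add: P_block_def)
  moreover have "\<forall>g\<in>K. rep c g \<in> carrier_mat (d c) (d c)" if "c \<in> Blocks" for c
    using block(1)[OF that] by (simp add: unitary_rep_def)
  ultimately show "\<exists>c. ?P = c \<cdot>\<^sub>m 1\<^sub>m (d b)"
    using intertwiner_scalar_if_identical_or_inequivalent[OF block(2)[OF b] block(2)[OF b']] K_id nonzero b b'
    by blast
qed

end
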